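(* A $\mathbb{B}$-topological space $(X,\tau)$ is regular if and only if both topological spaces $(X,\tau[tt])$ and $(X,\tau[ff])$ are regular. In particular, for every topological space $(X,\mathcal{T})$, the $\mathbb{B}$-topological space $\omega(X,\mathcal{T})$ is regular if and only if $(X,\mathcal{T})$ is regular.
   Context: $\mathbb{B}=\{0,1,tt,ff\}$ is the four-element Boolean algebra with bottom $0$, top $1$, and $tt,ff$ incomparable complements; $\neg$ its complement. A $\mathbb{B}$-topology on $X$ is $\tau\subseteq\mathbb{B}^X$ containing all constant maps and closed under arbitrary pointwise joins and finite pointwise meets; $\mu$ is closed if $\neg\mu\in\tau$; $\overline{\mu}$ is the pointwise meet of all closed sets $\ge\mu$. $\tau[b]=\{\lambda[b]:\lambda\in\tau\}$ with $\lambda[b]=\{x:\lambda(x)\ge b\}$. $(X,\tau)$ is regular if for every $\lambda\in\tau$, $\lambda=\bigvee\{\mu\in\tau:\overline{\mu}\le\lambda\}$. For a topological space $(X,\mathcal{T})$, $\omega(\mathcal{T})=\{\lambda\in\mathbb{B}^X:\lambda[tt]\in\mathcal{T},\lambda[ff]\in\mathcal{T}\}$ and $\omega(X,\mathcal{T})=(X,\omega(\mathcal{T}))$. A topological space is regular if every neighbourhood of a point contains a closed neighbourhood of that point (no $T_1$ assumption). *)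

theory Defs
  imports "HOL-Analysis.Analysis" "HOL-Library.Product_Order"
begin

text \<open>The four-element Boolean algebra B = {0,1,tt,ff} is represented as bool \<times> bool
  with the componentwise order: 0 = bot = (False,False), 1 = top = (True,True),
  tt = (True,False), ff = (False,True); complement is the Boolean-algebra uminus.\<close>

type_synonym B4 = "bool \<times> bool"

definition tt :: B4 where "tt = (True, False)"
definition ff :: B4 where "ff = (False, True)"

definition Bmaps :: "'a set \<Rightarrow> ('a \<Rightarrow> B4) set" where
  "Bmaps X = {f. \<forall>x. x \<notin> X \<longrightarrow> f x = bot}"

definition constB :: "'a set \<Rightarrow> B4 \<Rightarrow> 'a \<Rightarrow> B4" where
  "constB X b = (\<lambda>x. if x \<in> X then b else bot)"

definition is_Btopology :: "'a set \<Rightarrow> ('a \<Rightarrow> B4) set \<Rightarrow> bool" where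
  "is_Btopology X \<tau> \<longleftrightarrow>
     \<tau> \<subseteq> Bmaps X \<and>
     (\<forall>b. constB X b \<in> \<tau>) \<and>
     (\<forall>S. S \<subseteq> \<tau> \<longrightarrow> (\<lambda>x. SUP f\<in>S. f x) \<in> \<tau>) \<and>
     (\<forall>f\<in>\<tau>. \<forall>g\<in>\<tau>. (\<lambda>x. inf (f x) (g x)) \<in> \<tau>)"

definition Bcompl :: "'a set \<Rightarrow> ('a \<Rightarrow> B4) \<Rightarrow> 'a \<Rightarrow> B4" where
  "Bcompl X \<mu> = (\<lambda>x. if x \<in> X then - \<mu> x else bot)"

definition Bclosed :: "'a set \<Rightarrow> ('a \<Rightarrow> B4) set \<Rightarrow> ('a \<Rightarrow> B4) \<Rightarrow> bool" where
  "Bclosed X \<tau> \<mu> \<longleftrightarrow> \<mu> \<in> Bmaps X \<and> Bcompl X \<mu> \<in> \<tau>"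

definition Bclosure :: "'a set \<Rightarrow> ('a \<Rightarrow> B4) set \<Rightarrow> ('a \<Rightarrow> B4) \<Rightarrow> 'a \<Rightarrow> B4" where
  "Bclosure X \<tau> \<mu> = (\<lambda>x. if x \<in> X then (INF \<nu>\<in>{\<nu>. Bclosed X \<tau> \<nu> \<and> (\<forall>y. \<mu> y \<le> \<nu> y)}. \<nu> x) else bot)"

definition Bregular :: "'a set \<Rightarrow> ('a \<Rightarrow> B4) set \<Rightarrow> bool" where
  "Bregular X \<tau> \<longleftrightarrow>
     (\<forall>l\<in>\<tau>. l = (\<lambda>x. SUP \<mu>\<in>{\<mu>\<in>\<tau>. \<forall>y. Bclosure X \<tau> \<mu> y \<le> l y}. \<mu> x))"

definition level :: "'a set \<Rightarrow> ('a \<Rightarrow> B4) \<Rightarrow> B4 \<Rightarrow> 'a set" where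
  "level X l b = {x \<in> X. b \<le> l x}"

definition Blevel_top :: "'a set \<Rightarrow> ('a \<Rightarrow> B4) set \<Rightarrow> B4 \<Rightarrow> 'a topology" where
  "Blevel_top X \<tau> b = topology (\<lambda>U. U \<in> (\<lambda>l. level X l b) ` \<tau>)"

definition omegaB :: "'a topology \<Rightarrow> ('a \<Rightarrow> B4) set" where
  "omegaB T = {l \<in> Bmaps (topspace T).
      openin T (level (topspace T) l tt) \<and> openin T (level (topspace T) l ff)}"

end

theory Submission
  imports Defs
begin

text \<open>The elements tt and ff are the atoms of B, and every element of B is the join of the
  atoms below it. Hence a B-valued map is determined by its two level sets, joins, meets and
  complements act levelwise, the B-closure of \<open>\<mu>\<close> at level a is the closure of \<open>\<mu>[a]\<close>
  in \<open>\<tau>[a]\<close>, and the B-regularity condition splits into the regularity of the two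
  level topologies. For \<open>\<omega>(T)\<close> both level topologies are T itself.\<close>

lemma regular_space_closure_of_nbhd:
  "regular_space X \<longleftrightarrow> (\<forall>W x. openin X W \<and> x \<in> W \<longrightarrow> (\<exists>U. openin X U \<and> x \<in> U \<and> X closure_of U \<subseteq> W))"
  unfolding neighbourhood_base_of_closedin[symmetric] neighbourhood_base_of
  by (meson closedin_closure_of closure_of_minimal closure_of_subset openin_subset order_trans)


lemma atom_le_SUP:
  assumes "a \<in> {tt, ff}"
  shows "a \<le> (SUP i\<in>S. f i) \<longleftrightarrow> (\<exists>i\<in>S. a \<le> f i)"
  using assms by (auto simp: tt_def ff_def less_eq_prod_def fst_SUP snd_SUP)

lemma atom_le_uminus:
  assumes "a \<in> {tt, ff}"
  shows "a \<le> - p \<longleftrightarrow> \<not> a \<le> (p::B4)"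
  using assms by (cases p) (auto simp: tt_def ff_def less_eq_prod_def)

lemma le_uminus_atom:
  assumes "a \<in> {tt, ff}"
  shows "p \<le> - a \<longleftrightarrow> \<not> a \<le> (p::B4)"
  using assms by (cases p) (auto simp: tt_def ff_def less_eq_prod_def)

lemma inf_atom:
  assumes "a \<in> {tt, ff}"
  shows "inf p a = (if a \<le> p then a else (bot::B4))"
  using assms by (cases p) (auto simp: tt_def ff_def less_eq_prod_def bot_prod_def)

lemma atom_le_atom:
  assumes "a \<in> {tt, ff}" "b \<in> {tt, ff}"
  shows "b \<le> a \<longleftrightarrow> b = a"
  using assms by (auto simp: tt_def ff_def less_eq_prod_def)

lemma B4_le_iff_atoms: "p \<le> q \<longleftrightarrow> (\<forall>a\<in>{tt, ff}. a \<le> p \<longrightarrow> a \<le> (q::B4))"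
  by (cases p; cases q) (auto simp: tt_def ff_def less_eq_prod_def)

lemma atom_not_bot: "a \<in> {tt, ff} \<Longrightarrow> \<not> a \<le> bot"
  by (auto simp: tt_def ff_def less_eq_prod_def bot_prod_def)

definition Bchar :: "'a set \<Rightarrow> B4 \<Rightarrow> 'a \<Rightarrow> B4" where
  "Bchar U a = (\<lambda>x. if x \<in> U then a else bot)"

lemma level_Bchar:
  assumes "a \<in> {tt, ff}" "b \<in> {tt, ff}"
  shows "level X (Bchar U a) b = (if b = a then X \<inter> U else {})"
  using assms atom_le_atom[OF assms] atom_not_bot[OF assms(2)] by (auto simp: level_def Bchar_def)

lemma level_constB: "level X (constB X b) a = (if a \<le> b then X else {})"
  by (auto simp: level_def constB_def)

lemma level_SUP:
  assumes "a \<in> {tt, ff}"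
  shows "level X (\<lambda>x. SUP f\<in>S. f x) a = (\<Union>f\<in>S. level X f a)"
  using atom_le_SUP[OF assms] by (auto simp: level_def)

lemma level_inf: "level X (\<lambda>x. inf (f x) (g x)) a = level X f a \<inter> level X g a"
  by (auto simp: level_def)

lemma Bchar_Int: "Bchar (S \<inter> T) a = (\<lambda>x. inf (Bchar S a x) (Bchar T a x))"
  by (auto simp: Bchar_def)

lemma Bchar_Union: "Bchar (\<Union>K) a = (\<lambda>x. SUP U\<in>K. Bchar U a x)"
proof
  fix x
  have upper: "(SUP U\<in>K. Bchar U a x) \<le> a"
    by (rule SUP_least) (simp add: Bchar_def)
  show "Bchar (\<Union>K) a x = (SUP U\<in>K. Bchar U a x)"
  proof (cases "x \<in> \<Union>K")
    case True
    then obtain U where "U \<in> K" "Bchar U a x = a" by (auto simp: Bchar_def)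
    then have "a \<le> (SUP U\<in>K. Bchar U a x)" by (metis SUP_upper)
    with upper True show ?thesis by (simp add: Bchar_def)
  qed (auto simp: Bchar_def)
qed

lemma Btopology_subset_Bmaps: "is_Btopology X \<tau> \<Longrightarrow> \<tau> \<subseteq> Bmaps X"
  unfolding is_Btopology_def by blast

lemma Btopology_vanishes_outside:
  "is_Btopology X \<tau> \<Longrightarrow> l \<in> \<tau> \<Longrightarrow> x \<notin> X \<Longrightarrow> l x = bot"
  by (auto simp: is_Btopology_def Bmaps_def)

lemma Btopology_constB: "is_Btopology X \<tau> \<Longrightarrow> constB X b \<in> \<tau>"
  unfolding is_Btopology_def by blast

lemma Btopology_inf: "is_Btopology X \<tau> \<Longrightarrow> f \<in> \<tau> \<Longrightarrow> g \<in> \<tau> \<Longrightarrow> (\<lambda>x. inf (f x) (g x)) \<in> \<tau>"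
  unfolding is_Btopology_def by blast

lemma Btopology_SUP: "is_Btopology X \<tau> \<Longrightarrow> S \<subseteq> \<tau> \<Longrightarrow> (\<lambda>x. SUP f\<in>S. f x) \<in> \<tau>"
  unfolding is_Btopology_def by blast

lemma Btopology_Bchar_level:
  assumes B: "is_Btopology X \<tau>" and l: "l \<in> \<tau>" and a: "a \<in> {tt, ff}"
  shows "Bchar (level X l a) a \<in> \<tau>"
proof -
  have "(\<lambda>x. inf (l x) (constB X a x)) \<in> \<tau>"
    using B l by (simp add: Btopology_inf Btopology_constB)
  moreover have "(\<lambda>x. inf (l x) (constB X a x)) = Bchar (level X l a) a"
  proof
    fix x show "inf (l x) (constB X a x) = Bchar (level X l a) a x"
      using Btopology_vanishes_outside[OF B l, of x]
      by (cases "x \<in> X") (simp_all add: inf_atom[OF a] constB_def Bchar_def level_def)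
  qed
  ultimately show ?thesis by simp
qed

lemma openin_Blevel_top:
  assumes B: "is_Btopology X \<tau>" and a: "a \<in> {tt, ff}"
  shows "openin (Blevel_top X \<tau> a) U \<longleftrightarrow> U \<subseteq> X \<and> Bchar U a \<in> \<tau>"
proof -
  have levels: "(\<lambda>U. U \<in> (\<lambda>l. level X l a) ` \<tau>) = (\<lambda>U. U \<subseteq> X \<and> Bchar U a \<in> \<tau>)"
  proof (intro ext iffI)
    fix U assume "U \<in> (\<lambda>l. level X l a) ` \<tau>"
    then show "U \<subseteq> X \<and> Bchar U a \<in> \<tau>"
      using Btopology_Bchar_level[OF B _ a] by (auto simp: level_def)
  next
    fix U assume "U \<subseteq> X \<and> Bchar U a \<in> \<tau>"
    moreover from this have "level X (Bchar U a) a = U"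
      by (simp add: level_Bchar[OF a a] Int_absorb1)
    ultimately show "U \<in> (\<lambda>l. level X l a) ` \<tau>" by (metis image_eqI)
  qed
  have "istopology (\<lambda>U. U \<subseteq> X \<and> Bchar U a \<in> \<tau>)"
    unfolding istopology_def
  proof (rule conjI; intro allI impI)
    fix S T assume "S \<subseteq> X \<and> Bchar S a \<in> \<tau>" "T \<subseteq> X \<and> Bchar T a \<in> \<tau>"
    then show "S \<inter> T \<subseteq> X \<and> Bchar (S \<inter> T) a \<in> \<tau>"
      by (auto simp: Bchar_Int intro: Btopology_inf[OF B])
  next
    fix K assume K: "\<forall>U\<in>K. U \<subseteq> X \<and> Bchar U a \<in> \<tau>"
    have "(\<lambda>x. SUP f\<in>(\<lambda>U. Bchar U a) ` K. f x) \<in> \<tau>"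
      using K by (intro Btopology_SUP[OF B]) auto
    with K show "\<Union>K \<subseteq> X \<and> Bchar (\<Union>K) a \<in> \<tau>"
      by (auto simp: Bchar_Union image_image)
  qed
  then show ?thesis
    unfolding Blevel_top_def levels by simp
qed

lemma topspace_Blevel_top:
  assumes B: "is_Btopology X \<tau>" and a: "a \<in> {tt, ff}"
  shows "topspace (Blevel_top X \<tau> a) = X"
proof -
  have "Bchar X a = constB X a" by (simp add: Bchar_def constB_def)
  then have "openin (Blevel_top X \<tau> a) X"
    using B by (simp add: openin_Blevel_top[OF B a] Btopology_constB)
  then show ?thesis
    using openin_subset openin_Blevel_top[OF B a] by (metis openin_topspace subset_antisym)
qed

lemma openin_Blevel_top_level:
  assumes B: "is_Btopology X \<tau>" and l: "l \<in> \<tau>" and a: "a \<in> {tt, ff}"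
  shows "openin (Blevel_top X \<tau> a) (level X l a)"
  using Btopology_Bchar_level[OF B l a] by (auto simp: openin_Blevel_top[OF B a] level_def)

lemma le_Bclosure: "\<mu> \<in> Bmaps X \<Longrightarrow> \<mu> x \<le> Bclosure X \<tau> \<mu> x"
  by (auto simp: Bclosure_def Bmaps_def intro: INF_greatest)

lemma atom_le_Bclosure:
  assumes B: "is_Btopology X \<tau>" and a: "a \<in> {tt, ff}" and \<mu>: "\<mu> \<in> Bmaps X" and x: "x \<in> X"
  shows "a \<le> Bclosure X \<tau> \<mu> x \<longleftrightarrow> x \<in> Blevel_top X \<tau> a closure_of level X \<mu> a"
proof -
  let ?T = "Blevel_top X \<tau> a"
  let ?C = "?T closure_of level X \<mu> a"
  have topspace: "topspace ?T = X"
    by (rule topspace_Blevel_top[OF B a])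
  have "a \<le> Bclosure X \<tau> \<mu> x \<longleftrightarrow> (\<forall>\<nu>. Bclosed X \<tau> \<nu> \<and> (\<forall>y. \<mu> y \<le> \<nu> y) \<longrightarrow> a \<le> \<nu> x)"
    using x by (auto simp: Bclosure_def le_INF_iff)
  also have "\<dots> \<longleftrightarrow> x \<in> ?C"
  proof
    assume above: "\<forall>\<nu>. Bclosed X \<tau> \<nu> \<and> (\<forall>y. \<mu> y \<le> \<nu> y) \<longrightarrow> a \<le> \<nu> x"
    \<comment> \<open>a closed map above \<open>\<mu>\<close> whose a-level is exactly the closure of \<open>\<mu>[a]\<close>\<close>
    define \<nu> where "\<nu> = (\<lambda>y. if y \<in> X then if y \<in> ?C then top else - a else bot)"
    have "Bcompl X \<nu> = Bchar (X - ?C) a"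
      by (auto simp: Bcompl_def Bchar_def \<nu>_def)
    moreover have "openin ?T (X - ?C)"
      using closedin_closure_of[of ?T] by (simp add: closedin_def topspace)
    ultimately have "Bclosed X \<tau> \<nu>"
      using openin_Blevel_top[OF B a] by (auto simp: Bclosed_def Bmaps_def \<nu>_def)
    moreover have "\<mu> y \<le> \<nu> y" for y
    proof (cases "y \<in> X")
      case True
      have "level X \<mu> a \<subseteq> ?C"
        by (rule closure_of_subset) (auto simp: topspace level_def)
      with True show ?thesis
        by (auto simp: \<nu>_def level_def le_uminus_atom[OF a])
    qed (use \<mu> in \<open>auto simp: Bmaps_def\<close>)
    ultimately have "a \<le> \<nu> x"
      using above by blast
    then show "x \<in> ?C"
      using x atom_le_uminus[OF a, of a] by (auto simp: \<nu>_def split: if_splits)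
  next
    assume "x \<in> ?C"
    show "\<forall>\<nu>. Bclosed X \<tau> \<nu> \<and> (\<forall>y. \<mu> y \<le> \<nu> y) \<longrightarrow> a \<le> \<nu> x"
    proof (intro allI impI, elim conjE)
      fix \<nu> assume "Bclosed X \<tau> \<nu>" and above: "\<forall>y. \<mu> y \<le> \<nu> y"
      then have "openin ?T (level X (Bcompl X \<nu>) a)"
        by (simp add: Bclosed_def openin_Blevel_top_level[OF B _ a])
      moreover have "level X (Bcompl X \<nu>) a = X - level X \<nu> a"
        by (auto simp: level_def Bcompl_def atom_le_uminus[OF a])
      ultimately have "closedin ?T (level X \<nu> a)"
        by (auto simp: closedin_def topspace level_def)
      moreover have "level X \<mu> a \<subseteq> level X \<nu> a"
        using above order_trans by (auto simp: level_def)
      ultimately have "?C \<subseteq> level X \<nu> a"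
        by (rule closure_of_minimal[rotated])
      with \<open>x \<in> ?C\<close> show "a \<le> \<nu> x"
        by (auto simp: level_def)
    qed
  qed
  finally show ?thesis .
qed

lemma Bclosure_le_iff:
  assumes B: "is_Btopology X \<tau>" and \<mu>: "\<mu> \<in> Bmaps X"
  shows "(\<forall>y. Bclosure X \<tau> \<mu> y \<le> l y) \<longleftrightarrow>
    (\<forall>a\<in>{tt, ff}. Blevel_top X \<tau> a closure_of level X \<mu> a \<subseteq> level X l a)"
proof -
  have closure_in_X: "Blevel_top X \<tau> a closure_of S \<subseteq> X" if "a \<in> {tt, ff}" for a S
    using closure_of_subset_topspace topspace_Blevel_top[OF B that] by metis
  have "(\<forall>y. Bclosure X \<tau> \<mu> y \<le> l y) \<longleftrightarrow> (\<forall>y\<in>X. Bclosure X \<tau> \<mu> y \<le> l y)"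
    by (auto simp: Bclosure_def)
  also have "\<dots> \<longleftrightarrow> (\<forall>y\<in>X. \<forall>a\<in>{tt, ff}. a \<le> Bclosure X \<tau> \<mu> y \<longrightarrow> a \<le> l y)"
    using B4_le_iff_atoms by blast
  also have "\<dots> \<longleftrightarrow> (\<forall>a\<in>{tt, ff}. \<forall>y\<in>X. y \<in> Blevel_top X \<tau> a closure_of level X \<mu> a \<longrightarrow> a \<le> l y)"
    using atom_le_Bclosure[OF B _ \<mu>] by blast
  also have "\<dots> \<longleftrightarrow> (\<forall>a\<in>{tt, ff}. Blevel_top X \<tau> a closure_of level X \<mu> a \<subseteq> level X l a)"
    using closure_in_X unfolding level_def by blast
  finally show ?thesis .
qed

lemma Bregular_imp_regular_level:
  assumes B: "is_Btopology X \<tau>" and R: "Bregular X \<tau>" and a: "a \<in> {tt, ff}"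
  shows "regular_space (Blevel_top X \<tau> a)"
  unfolding regular_space_closure_of_nbhd
proof (intro allI impI, elim conjE)
  fix W x assume W: "openin (Blevel_top X \<tau> a) W" and "x \<in> W"
  let ?l = "Bchar W a"
  let ?M = "{\<mu>\<in>\<tau>. \<forall>y. Bclosure X \<tau> \<mu> y \<le> ?l y}"
  have l: "?l \<in> \<tau>" and "W \<subseteq> X"
    using W openin_Blevel_top[OF B a] by auto
  have "a \<le> ?l x"
    using \<open>x \<in> W\<close> by (simp add: Bchar_def)
  also have "?l = (\<lambda>y. SUP \<mu>\<in>?M. \<mu> y)"
    using R l unfolding Bregular_def by (rule bspec)
  finally have "\<exists>\<mu>\<in>?M. a \<le> \<mu> x"
    by (simp only: atom_le_SUP[OF a])
  then obtain \<mu> where \<mu>: "\<mu> \<in> \<tau>" "\<forall>y. Bclosure X \<tau> \<mu> y \<le> ?l y" "a \<le> \<mu> x"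
    by blast
  have "\<mu> \<in> Bmaps X"
    using \<mu>(1) Btopology_subset_Bmaps[OF B] by blast
  then have "Blevel_top X \<tau> a closure_of level X \<mu> a \<subseteq> level X ?l a"
    using Bclosure_le_iff[OF B, of \<mu> ?l] \<mu>(2) a by blast
  also have "level X ?l a = W"
    using \<open>W \<subseteq> X\<close> by (simp add: level_Bchar[OF a a] Int_absorb1)
  finally show "\<exists>U. openin (Blevel_top X \<tau> a) U \<and> x \<in> U \<and> Blevel_top X \<tau> a closure_of U \<subseteq> W"
    using \<mu> \<open>x \<in> W\<close> \<open>W \<subseteq> X\<close> openin_Blevel_top_level[OF B \<mu>(1) a]
    by (auto simp: level_def)
qed

lemma regular_levels_imp_Bregular:
  assumes B: "is_Btopology X \<tau>" and R: "\<forall>a\<in>{tt, ff}. regular_space (Blevel_top X \<tau> a)"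
  shows "Bregular X \<tau>"
  unfolding Bregular_def
proof (intro ballI ext antisym)
  fix l x assume l: "l \<in> \<tau>"
  let ?M = "{\<mu>\<in>\<tau>. \<forall>y. Bclosure X \<tau> \<mu> y \<le> l y}"
  show "(SUP \<mu>\<in>?M. \<mu> x) \<le> l x"
  proof (rule SUP_least)
    fix \<mu> assume "\<mu> \<in> ?M"
    then have "\<mu> \<in> Bmaps X" and closure_le: "Bclosure X \<tau> \<mu> x \<le> l x"
      using Btopology_subset_Bmaps[OF B] by auto
    have "\<mu> x \<le> Bclosure X \<tau> \<mu> x"
      using \<open>\<mu> \<in> Bmaps X\<close> by (rule le_Bclosure)
    with closure_le show "\<mu> x \<le> l x"
      by (rule order_trans[rotated])
  qed
  have "a \<le> (SUP \<mu>\<in>?M. \<mu> x)" if a: "a \<in> {tt, ff}" and "a \<le> l x" for a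
  proof -
    have "x \<in> level X l a"
      using \<open>a \<le> l x\<close> Btopology_vanishes_outside[OF B l, of x] atom_not_bot[OF a]
      by (cases "x \<in> X") (auto simp: level_def)
    moreover have "regular_space (Blevel_top X \<tau> a)"
      using R a by blast
    ultimately obtain U where U: "openin (Blevel_top X \<tau> a) U" "x \<in> U"
        "Blevel_top X \<tau> a closure_of U \<subseteq> level X l a"
      using openin_Blevel_top_level[OF B l a] unfolding regular_space_closure_of_nbhd by blast
    have "U \<subseteq> X" and "Bchar U a \<in> \<tau>"
      using U(1) openin_Blevel_top[OF B a] by auto
    have "Blevel_top X \<tau> b closure_of level X (Bchar U a) b \<subseteq> level X l b"
      if b: "b \<in> {tt, ff}" for b
    proof (cases "b = a")
      case True
      then show ?thesis
        using U(3) \<open>U \<subseteq> X\<close> by (simp add: level_Bchar[OF a a] Int_absorb1)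
    qed (simp add: level_Bchar[OF a b])
    moreover have "Bchar U a \<in> Bmaps X"
      using \<open>Bchar U a \<in> \<tau>\<close> Btopology_subset_Bmaps[OF B] by blast
    ultimately have "Bchar U a \<in> ?M"
      using \<open>Bchar U a \<in> \<tau>\<close> by (simp add: Bclosure_le_iff[OF B])
    moreover have "a \<le> Bchar U a x"
      using \<open>x \<in> U\<close> by (simp add: Bchar_def)
    ultimately show ?thesis
      unfolding atom_le_SUP[OF a] by blast
  qed
  then show "l x \<le> (SUP \<mu>\<in>?M. \<mu> x)"
    by (subst B4_le_iff_atoms) blast
qed

lemma Bregular_iff_regular_levels:
  assumes "is_Btopology X \<tau>"
  shows "Bregular X \<tau> \<longleftrightarrow> regular_space (Blevel_top X \<tau> tt) \<and> regular_space (Blevel_top X \<tau> ff)"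
  using Bregular_imp_regular_level[OF assms] regular_levels_imp_Bregular[OF assms] by blast

lemma omegaB_iff:
  "l \<in> omegaB T \<longleftrightarrow> l \<in> Bmaps (topspace T) \<and> (\<forall>a\<in>{tt, ff}. openin T (level (topspace T) l a))"
  by (simp add: omegaB_def)

lemma is_Btopology_omegaB: "is_Btopology (topspace T) (omegaB T)"
  unfolding is_Btopology_def
proof (intro conjI allI impI ballI)
  show "omegaB T \<subseteq> Bmaps (topspace T)"
    by (auto simp: omegaB_def)
next
  fix b
  show "constB (topspace T) b \<in> omegaB T"
    unfolding omegaB_iff level_constB by (simp add: Bmaps_def constB_def)
next
  fix S assume S: "S \<subseteq> omegaB T"
  have "(SUP f\<in>S. f x) = bot" if "x \<notin> topspace T" for x
  proof -
    have "(SUP f\<in>S. f x) = (SUP f\<in>S. bot)"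
      using S that by (intro SUP_cong) (auto simp: omegaB_def Bmaps_def)
    then show ?thesis by simp
  qed
  moreover have "openin T (level (topspace T) (\<lambda>x. SUP f\<in>S. f x) a)" if a: "a \<in> {tt, ff}" for a
    unfolding level_SUP[OF a] using S a by (intro openin_Union) (auto simp: omegaB_iff)
  ultimately show "(\<lambda>x. SUP f\<in>S. f x) \<in> omegaB T"
    unfolding omegaB_iff Bmaps_def by blast
next
  fix f g assume "f \<in> omegaB T" "g \<in> omegaB T"
  then show "(\<lambda>x. inf (f x) (g x)) \<in> omegaB T"
    unfolding omegaB_iff level_inf Bmaps_def by (simp add: openin_Int)
qed

lemma Blevel_top_omegaB:
  assumes a: "a \<in> {tt, ff}"
  shows "Blevel_top (topspace T) (omegaB T) a = T"
proof -
  have "U \<subseteq> topspace T \<and> Bchar U a \<in> omegaB T \<longleftrightarrow> openin T U" for U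
  proof
    assume U: "U \<subseteq> topspace T \<and> Bchar U a \<in> omegaB T"
    then have "openin T (level (topspace T) (Bchar U a) a)"
      using a unfolding omegaB_iff by blast
    moreover have "level (topspace T) (Bchar U a) a = U"
      using U by (simp add: level_Bchar[OF a a] Int_absorb1)
    ultimately show "openin T U"
      by simp
  next
    assume U: "openin T U"
    have "openin T (level (topspace T) (Bchar U a) b)" if b: "b \<in> {tt, ff}" for b
      using U openin_subset[OF U] by (simp add: level_Bchar[OF a b] Int_absorb1)
    moreover have "Bchar U a \<in> Bmaps (topspace T)"
      using openin_subset[OF U] by (auto simp: Bmaps_def Bchar_def)
    ultimately show "U \<subseteq> topspace T \<and> Bchar U a \<in> omegaB T"
      using openin_subset[OF U] unfolding omegaB_iff by blast
  qed
  then show ?thesis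
    by (simp add: topology_eq openin_Blevel_top[OF is_Btopology_omegaB a])
qed

theorem mainTheorem17:
  shows "(\<forall>(X::'a set) \<tau>. is_Btopology X \<tau> \<longrightarrow>
            (Bregular X \<tau> \<longleftrightarrow>
               regular_space (Blevel_top X \<tau> tt) \<and> regular_space (Blevel_top X \<tau> ff)))
         \<and> (\<forall>T::'a topology. Bregular (topspace T) (omegaB T) \<longleftrightarrow> regular_space T)"
proof -
  have "Bregular (topspace T) (omegaB T) \<longleftrightarrow> regular_space T" for T :: "'a topology"
    using Bregular_iff_regular_levels[OF is_Btopology_omegaB] by (simp add: Blevel_top_omegaB)
  then show ?thesis
    using Bregular_iff_regular_levels by blast
qed

end
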